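(* Let $G$ be a finite GVZ-group with $|\mathrm{cd}(G)|=2$. Let $N$ be a normal subgroup of $G$ such that $G'\not\subseteq N$ and $[Z(\chi),G]\subseteq N$ for some $\chi\in\mathrm{nl}(G)$. Then $Z(G/N)=Z(\chi)/N$.
   Context: All groups are finite. $\mathrm{Irr}(G)$ is the set of complex irreducible characters of $G$, $\mathrm{nl}(G)$ the set of non-linear irreducible characters, and $\mathrm{cd}(G)=\{\chi(1):\chi\in\mathrm{Irr}(G)\}$. For a character $\chi$, $Z(\chi)=\{g\in G: |\chi(g)|=\chi(1)\}$. A nonabelian group $G$ is a GVZ-group if for every $\chi\in\mathrm{Irr}(G)$ we have $\chi(g)=0$ for all $g\in G\setminus Z(\chi)$. *)

theory Defs
  imports "HOL-Algebra.Algebra" "Jordan_Normal_Form.Matrix"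
begin

definition mat_trace :: "complex mat \<Rightarrow> complex" where
  "mat_trace A = (\<Sum>i<dim_row A. A $$ (i, i))"

definition is_rep :: "('a, 'b) monoid_scheme \<Rightarrow> nat \<Rightarrow> ('a \<Rightarrow> complex mat) \<Rightarrow> bool" where
  "is_rep G n \<rho> \<longleftrightarrow> n > 0 \<and> (\<forall>g\<in>carrier G. \<rho> g \<in> carrier_mat n n)
     \<and> \<rho> \<one>\<^bsub>G\<^esub> = 1\<^sub>m n
     \<and> (\<forall>g\<in>carrier G. \<forall>h\<in>carrier G. \<rho> (g \<otimes>\<^bsub>G\<^esub> h) = \<rho> g * \<rho> h)"

definition invariant_subspace :: "('a, 'b) monoid_scheme \<Rightarrow> nat \<Rightarrow> ('a \<Rightarrow> complex mat) \<Rightarrow> complex vec set \<Rightarrow> bool" where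
  "invariant_subspace G n \<rho> W \<longleftrightarrow> W \<subseteq> carrier_vec n \<and> 0\<^sub>v n \<in> W
     \<and> (\<forall>v\<in>W. \<forall>w\<in>W. v + w \<in> W) \<and> (\<forall>c. \<forall>v\<in>W. c \<cdot>\<^sub>v v \<in> W)
     \<and> (\<forall>g\<in>carrier G. \<forall>v\<in>W. \<rho> g *\<^sub>v v \<in> W)"

definition irr_rep :: "('a, 'b) monoid_scheme \<Rightarrow> nat \<Rightarrow> ('a \<Rightarrow> complex mat) \<Rightarrow> bool" where
  "irr_rep G n \<rho> \<longleftrightarrow> is_rep G n \<rho> \<and>
     (\<forall>W. invariant_subspace G n \<rho> W \<longrightarrow> W = {0\<^sub>v n} \<or> W = carrier_vec n)"

definition character_of :: "('a, 'b) monoid_scheme \<Rightarrow> ('a \<Rightarrow> complex mat) \<Rightarrow> 'a \<Rightarrow> complex" where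
  "character_of G \<rho> = (\<lambda>g. if g \<in> carrier G then mat_trace (\<rho> g) else 0)"

definition Irr :: "('a, 'b) monoid_scheme \<Rightarrow> ('a \<Rightarrow> complex) set" where
  "Irr G = {\<chi>. \<exists>n \<rho>. irr_rep G n \<rho> \<and> \<chi> = character_of G \<rho>}"

definition cd :: "('a, 'b) monoid_scheme \<Rightarrow> complex set" where
  "cd G = (\<lambda>\<chi>. \<chi> \<one>\<^bsub>G\<^esub>) ` Irr G"

definition nl :: "('a, 'b) monoid_scheme \<Rightarrow> ('a \<Rightarrow> complex) set" where
  "nl G = {\<chi> \<in> Irr G. \<chi> \<one>\<^bsub>G\<^esub> \<noteq> 1}"

definition char_center :: "('a, 'b) monoid_scheme \<Rightarrow> ('a \<Rightarrow> complex) \<Rightarrow> 'a set" where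
  "char_center G \<chi> = {g \<in> carrier G. cmod (\<chi> g) = cmod (\<chi> \<one>\<^bsub>G\<^esub>)}"

definition group_center :: "('a, 'b) monoid_scheme \<Rightarrow> 'a set" where
  "group_center G = {z \<in> carrier G. \<forall>g\<in>carrier G. z \<otimes>\<^bsub>G\<^esub> g = g \<otimes>\<^bsub>G\<^esub> z}"

definition comm_subgroup :: "('a, 'b) monoid_scheme \<Rightarrow> 'a set \<Rightarrow> 'a set \<Rightarrow> 'a set" where
  "comm_subgroup G H K = generate G
     {h \<otimes>\<^bsub>G\<^esub> k \<otimes>\<^bsub>G\<^esub> inv\<^bsub>G\<^esub> h \<otimes>\<^bsub>G\<^esub> inv\<^bsub>G\<^esub> k | h k. h \<in> H \<and> k \<in> K}"

definition GVZ :: "('a, 'b) monoid_scheme \<Rightarrow> bool" where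
  "GVZ G \<longleftrightarrow> (\<exists>x\<in>carrier G. \<exists>y\<in>carrier G. x \<otimes>\<^bsub>G\<^esub> y \<noteq> y \<otimes>\<^bsub>G\<^esub> x)
     \<and> (\<forall>\<chi>\<in>Irr G. \<forall>g \<in> carrier G - char_center G \<chi>. \<chi> g = 0)"

end

(* Since G' is not contained in N, some
   nonlinear irreducible character \<psi> has N in its kernel: otherwise every representation of G/N
   would be triangularisable with abelian image, and the permutation representation on the cosets
   of N would make G/N abelian. As cd(G) = {1, \<chi>(1)}, \<psi>(1) = \<chi>(1), and for a GVZ-group
   |Z(\<chi>)| \<chi>(1)\<^sup>2 = |G|, so |Z(\<chi>)| = |Z(\<psi>)|. Let Z be the preimage of Z(G/N). The hypothesis
   [Z(\<chi>), G] \<subseteq> N gives Z(\<chi>) \<subseteq> Z, and N \<subseteq> ker \<psi> gives Z \<subseteq> Z(\<psi>) by Schur's lemma.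
   Comparing cardinalities, Z(\<chi>) = Z. *)

theory Submission
  imports Defs "Jordan_Normal_Form.Schur_Decomposition" "Jordan_Normal_Form.Spectral_Radius"
    "Jordan_Normal_Form.DL_Rank"
begin

section \<open>Matrices\<close>

lemma index_mult_mat_sum:
  assumes "A \<in> carrier_mat n m" "B \<in> carrier_mat m p" "i < n" "l < p"
  shows "(A * B) $$ (i, l) = (\<Sum>q<m. A $$ (i, q) * B $$ (q, l))"
  using assms by (auto simp: scalar_prod_def lessThan_atLeast0 intro!: sum.cong)

lemma mat_trace_mult_comm:
  assumes MN: "M \<in> carrier_mat n m" "N \<in> carrier_mat m n"
  shows "mat_trace (M * N) = mat_trace (N * M)"
proof -
  have dim: "dim_row (M * N) = n" "dim_row (N * M) = m" using MN by auto
  have "mat_trace (M * N) = (\<Sum>i<n. \<Sum>q<m. M $$ (i, q) * N $$ (q, i))"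
    unfolding mat_trace_def dim by (rule sum.cong[OF refl], rule index_mult_mat_sum[OF MN]) auto
  also have "\<dots> = (\<Sum>q<m. \<Sum>i<n. N $$ (q, i) * M $$ (i, q))"
    by (subst sum.swap) (simp add: mult.commute)
  also have "\<dots> = mat_trace (N * M)"
    unfolding mat_trace_def dim
    by (rule sum.cong[OF refl], rule index_mult_mat_sum[OF MN(2,1), symmetric]) auto
  finally show ?thesis .
qed

lemma mat_trace_similar:
  assumes "similar_mat_wit A B P Q"
  shows "mat_trace A = mat_trace B"
proof -
  obtain n where c: "A \<in> carrier_mat n n" "B \<in> carrier_mat n n" "P \<in> carrier_mat n n" "Q \<in> carrier_mat n n"
    and QP: "Q * P = 1\<^sub>m n" and A: "A = P * B * Q"
    using assms unfolding similar_mat_wit_def Let_def by auto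
  have "mat_trace A = mat_trace (Q * (P * B))"
    unfolding A using c by (intro mat_trace_mult_comm[of _ n n]) auto
  also have "Q * (P * B) = B"
    using c QP by (simp flip: assoc_mult_mat[of Q n n P n B n])
  finally show ?thesis .
qed

lemma upper_triangular_mult:
  fixes A B :: "'a :: semiring_1 mat"
  assumes A: "A \<in> carrier_mat n n" and B: "B \<in> carrier_mat n n"
    and "upper_triangular A" "upper_triangular B"
  shows "upper_triangular (A * B)"
    and "i < n \<Longrightarrow> (A * B) $$ (i, i) = A $$ (i, i) * B $$ (i, i)"
proof -
  have zero: "A $$ (i, q) * B $$ (q, j) = 0" if "i < n" "q < n" "q < i \<or> j < q" for i j q
    using that assms by (auto dest: upper_triangularD)
  show "upper_triangular (A * B)"
  proof (rule upper_triangularI)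
    fix i j assume "j < i" "i < dim_row (A * B)"
    then have "(A * B) $$ (i, j) = (\<Sum>q<n. A $$ (i, q) * B $$ (q, j))"
      using A B by (intro index_mult_mat_sum[OF A B]) auto
    then show "(A * B) $$ (i, j) = 0"
      using \<open>j < i\<close> \<open>i < dim_row (A * B)\<close> A by (auto intro!: sum.neutral zero)
  qed
  show "(A * B) $$ (i, i) = A $$ (i, i) * B $$ (i, i)" if i: "i < n"
  proof -
    have "(A * B) $$ (i, i) = A $$ (i, i) * B $$ (i, i) + (\<Sum>q\<in>{..<n} - {i}. A $$ (i, q) * B $$ (q, i))"
      using i index_mult_mat_sum[OF A B i i] by (simp add: sum.remove[of "{..<n}" i])
    also have "(\<Sum>q\<in>{..<n} - {i}. A $$ (i, q) * B $$ (q, i)) = 0"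
      using i zero by (intro sum.neutral) (auto simp: nat_neq_iff)
    finally show ?thesis by simp
  qed
qed

lemma upper_triangular_pow:
  fixes A :: "'a :: semiring_1 mat"
  assumes A: "A \<in> carrier_mat n n" and "upper_triangular A"
  shows "upper_triangular (A ^\<^sub>m k) \<and> (\<forall>i<n. (A ^\<^sub>m k) $$ (i, i) = A $$ (i, i) ^ k)"
proof (induction k)
  case 0
  show ?case using A by auto
next
  case (Suc k)
  have "A ^\<^sub>m k \<in> carrier_mat n n" using A by simp
  with Suc show ?case
    using upper_triangular_mult[OF _ A _ assms(2)] by (simp add: power_commutes)
qed

lemma cnj_eq_pow_pred_if_pow_eq_1:
  fixes z :: complex
  assumes z: "z ^ m = 1" and m: "0 < m"
  shows "z ^ (m - 1) = cnj z"
proof -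
  have "cmod z ^ m = 1 ^ m" using z by (metis norm_one norm_power power_one)
  then have "cmod z = 1" using power_eq_imp_eq_base[of "cmod z" m 1] m by simp
  then have "z * cnj z = 1" by (metis complex_norm_square of_real_1 one_power2)
  moreover have "z ^ (m - 1) * z = 1"
    using z m by (metis Suc_diff_1 power_Suc2)
  ultimately show ?thesis by (metis mult.commute mult_1_right mult.assoc)
qed

(* Triangularise A: its diagonal entries are m-th roots of unity, and z ^ (m - 1) = cnj z for those. *)
lemma mat_trace_pow_pred_eq_cnj:
  fixes A :: "complex mat"
  assumes A: "A \<in> carrier_mat n n" and Am: "A ^\<^sub>m m = 1\<^sub>m n" and m: "0 < m"
  shows "mat_trace (A ^\<^sub>m (m - 1)) = cnj (mat_trace A)"
proof -
  obtain es where "char_poly A = (\<Prod>a\<leftarrow>es. [:- a, 1:])"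
    using char_poly_factorized[OF A] by blast
  then obtain B where B: "B \<in> carrier_mat n n" "upper_triangular B" "similar_mat A B"
    using schur_decomposition_exists[OF A] by blast
  then obtain P Q where AB: "similar_mat_wit A B P Q" unfolding similar_mat_def by blast
  have "B ^\<^sub>m m = Q * A ^\<^sub>m m * P"
    using similar_mat_wit_pow_id[OF similar_mat_wit_sym[OF AB]] .
  also have "\<dots> = 1\<^sub>m n"
    using AB A unfolding Am similar_mat_wit_def Let_def by auto
  finally have Bm: "B ^\<^sub>m m = 1\<^sub>m n" .
  have diag: "(B ^\<^sub>m k) $$ (i, i) = B $$ (i, i) ^ k" if "i < n" for i k
    using upper_triangular_pow[OF B(1,2)] that by blast
  have root: "B $$ (i, i) ^ m = 1" if "i < n" for i
    using diag[OF that, of m] Bm that by simp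
  have "mat_trace (A ^\<^sub>m (m - 1)) = mat_trace (B ^\<^sub>m (m - 1))"
    by (rule mat_trace_similar[OF similar_mat_wit_pow[OF AB]])
  also have "\<dots> = (\<Sum>i<n. cnj (B $$ (i, i)))"
    unfolding mat_trace_def using B(1) diag cnj_eq_pow_pred_if_pow_eq_1[OF root m] by simp
  also have "\<dots> = cnj (mat_trace B)"
    unfolding mat_trace_def using B(1) by simp
  also have "\<dots> = cnj (mat_trace A)"
    using mat_trace_similar[OF AB] by simp
  finally show ?thesis .
qed

lemma split_block_four_block_mat:
  assumes "A \<in> carrier_mat nr1 nc1" "B \<in> carrier_mat nr1 nc2"
    "C \<in> carrier_mat nr2 nc1" "D \<in> carrier_mat nr2 nc2"
  shows "split_block (four_block_mat A B C D) nr1 nc1 = (A, B, C, D)"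
  using assms unfolding split_block_def Let_def by (auto intro!: eq_matI)

lemma four_block_mat_inject:
  assumes "A \<in> carrier_mat nr1 nc1" "B \<in> carrier_mat nr1 nc2"
    "C \<in> carrier_mat nr2 nc1" "D \<in> carrier_mat nr2 nc2"
    and "A' \<in> carrier_mat nr1 nc1" "B' \<in> carrier_mat nr1 nc2"
    "C' \<in> carrier_mat nr2 nc1" "D' \<in> carrier_mat nr2 nc2"
    and "four_block_mat A B C D = four_block_mat A' B' C' D'"
  shows "A = A' \<and> B = B' \<and> C = C' \<and> D = D'"
proof -
  have "(A, B, C, D) = (A', B', C', D')"
    by (metis split_block_four_block_mat[OF assms(1-4)] split_block_four_block_mat[OF assms(5-8)] assms(9))
  then show ?thesis by simp
qed

lemma unitriangular_four_block_pow:
  fixes B :: "'a :: comm_ring_1 mat"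
  assumes B: "B \<in> carrier_mat k m"
  shows "four_block_mat (1\<^sub>m k) B (0\<^sub>m m k) (1\<^sub>m m) ^\<^sub>m j
    = four_block_mat (1\<^sub>m k) (of_nat j \<cdot>\<^sub>m B) (0\<^sub>m m k) (1\<^sub>m m)"
proof (induction j)
  case 0
  show ?case using B by (auto intro!: eq_matI)
next
  case (Suc j)
  have "four_block_mat (1\<^sub>m k) B (0\<^sub>m m k) (1\<^sub>m m) ^\<^sub>m Suc j
      = four_block_mat (1\<^sub>m k) (of_nat j \<cdot>\<^sub>m B) (0\<^sub>m m k) (1\<^sub>m m)
        * four_block_mat (1\<^sub>m k) B (0\<^sub>m m k) (1\<^sub>m m)"
    using Suc by simp
  also have "\<dots> = four_block_mat (1\<^sub>m k * 1\<^sub>m k + of_nat j \<cdot>\<^sub>m B * 0\<^sub>m m k)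
      (1\<^sub>m k * B + of_nat j \<cdot>\<^sub>m B * 1\<^sub>m m) (0\<^sub>m m k * 1\<^sub>m k + 1\<^sub>m m * 0\<^sub>m m k)
      (0\<^sub>m m k * B + 1\<^sub>m m * 1\<^sub>m m)"
    by (rule mult_four_block_mat) (use B in auto)
  also have "\<dots> = four_block_mat (1\<^sub>m k) (of_nat (Suc j) \<cdot>\<^sub>m B) (0\<^sub>m m k) (1\<^sub>m m)"
  proof (rule cong_four_block_mat)
    show "1\<^sub>m k * B + of_nat j \<cdot>\<^sub>m B * 1\<^sub>m m = of_nat (Suc j) \<cdot>\<^sub>m B"
      using B by (intro eq_matI) (auto simp: algebra_simps)
  qed (use B in simp_all)
  finally show ?case .
qed

lemma unitriangular_four_block_eq_one:
  fixes B :: "'a :: {idom, ring_char_0} mat"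
  assumes B: "B \<in> carrier_mat k m"
    and pow: "four_block_mat (1\<^sub>m k) B (0\<^sub>m m k) (1\<^sub>m m) ^\<^sub>m j = 1\<^sub>m (k + m)" and j: "0 < j"
  shows "four_block_mat (1\<^sub>m k) B (0\<^sub>m m k) (1\<^sub>m m) = 1\<^sub>m (k + m)"
proof -
  have "four_block_mat (1\<^sub>m k) (of_nat j \<cdot>\<^sub>m B) (0\<^sub>m m k) (1\<^sub>m m)
      = four_block_mat (1\<^sub>m k) (0\<^sub>m k m) (0\<^sub>m m k) (1\<^sub>m m)"
    using pow unfolding unitriangular_four_block_pow[OF B] by simp
  then have "of_nat j \<cdot>\<^sub>m B = 0\<^sub>m k m"
    by (rule four_block_mat_inject[THEN conjunct2, THEN conjunct1, rotated -1]) (use B in auto)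
  have "B = 0\<^sub>m k m"
  proof (rule eq_matI)
    fix i l assume "i < dim_row (0\<^sub>m k m :: 'a mat)" "l < dim_col (0\<^sub>m k m :: 'a mat)"
    then have "of_nat j * B $$ (i, l) = 0"
      using B arg_cong[OF \<open>of_nat j \<cdot>\<^sub>m B = 0\<^sub>m k m\<close>, of "\<lambda>M. M $$ (i, l)"] by simp
    then show "B $$ (i, l) = 0\<^sub>m k m $$ (i, l)"
      using j \<open>i < dim_row (0\<^sub>m k m :: 'a mat)\<close> \<open>l < dim_col (0\<^sub>m k m :: 'a mat)\<close> by simp
  qed (use B in auto)
  then show ?thesis by simp
qed

lemma mat_1x1_mult_comm:
  fixes A B :: "'a :: comm_semiring_0 mat"
  assumes "A \<in> carrier_mat 1 1" "B \<in> carrier_mat 1 1"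
  shows "A * B = B * A"
  using assms by (intro eq_matI) (auto simp: scalar_prod_def mult.commute)

lemma conj_eq_one_imp_eq_one:
  fixes M :: "'a :: semiring_1 mat"
  assumes "P \<in> carrier_mat n n" "Q \<in> carrier_mat n n" "M \<in> carrier_mat n n"
    and "P * Q = 1\<^sub>m n" and "Q * M * P = 1\<^sub>m n"
  shows "M = 1\<^sub>m n"
proof -
  have "M = (P * Q) * M * (P * Q)" using assms(1-4) by simp
  also have "\<dots> = P * (Q * M * P) * Q" using assms(1-3) by (simp add: assoc_mult_mat[of _ n n _ n _ n])
  finally show ?thesis using assms by simp
qed

lemma index_mult_single_entry_mult:
  fixes A B :: "'a :: comm_semiring_1 mat"
  assumes A: "A \<in> carrier_mat n n" and B: "B \<in> carrier_mat n n" and "i < n" "j < n" "k < n" "l < n"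
  shows "(A * mat n n (\<lambda>(a, b). if a = j \<and> b = k then 1 else 0) * B) $$ (i, l) = A $$ (i, j) * B $$ (k, l)"
proof -
  let ?E = "mat n n (\<lambda>(a, b). if a = j \<and> b = k then 1 else 0) :: 'a mat"
  have AE: "A * ?E \<in> carrier_mat n n" using A by simp
  have AE_entry: "(A * ?E) $$ (i, q) = (if q = k then A $$ (i, j) else 0)" if "q < n" for q
  proof -
    have "(A * ?E) $$ (i, q) = (\<Sum>p<n. A $$ (i, p) * ?E $$ (p, q))"
      using assms that by (intro index_mult_mat_sum[OF A]) auto
    also have "\<dots> = (if q = k then A $$ (i, j) else 0)"
      using assms that by (simp add: if_distrib sum.delta cong: if_cong)
    finally show ?thesis .
  qed
  have "(A * ?E * B) $$ (i, l) = (\<Sum>q<n. (A * ?E) $$ (i, q) * B $$ (q, l))"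
    using assms by (intro index_mult_mat_sum[OF AE B]) auto
  also have "\<dots> = (\<Sum>q<n. if q = k then A $$ (i, j) * B $$ (q, l) else 0)"
    by (intro sum.cong refl) (simp only: AE_entry lessThan_iff, simp)
  also have "\<dots> = A $$ (i, j) * B $$ (k, l)"
    using assms by simp
  finally show ?thesis .
qed

definition sum_mats :: "nat \<Rightarrow> ('b \<Rightarrow> 'a :: comm_monoid_add mat) \<Rightarrow> 'b set \<Rightarrow> 'a mat" where
  "sum_mats n M S = mat n n (\<lambda>ij. \<Sum>x\<in>S. M x $$ ij)"

lemma sum_mats_carrier [simp]: "sum_mats n M S \<in> carrier_mat n n"
  unfolding sum_mats_def by simp

lemma sum_mats_cong:
  "(\<And>x. x \<in> S \<Longrightarrow> M x = M' x) \<Longrightarrow> sum_mats n M S = sum_mats n M' S"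
  unfolding sum_mats_def by (auto intro!: sum.cong)

lemma sum_mats_mult:
  fixes N :: "'a :: semiring_0 mat"
  assumes "\<And>x. x \<in> S \<Longrightarrow> M x \<in> carrier_mat n n" and N: "N \<in> carrier_mat n n"
  shows "sum_mats n M S * N = sum_mats n (\<lambda>x. M x * N) S"
proof (rule eq_matI)
  fix i l assume "i < dim_row (sum_mats n (\<lambda>x. M x * N) S)" "l < dim_col (sum_mats n (\<lambda>x. M x * N) S)"
  then have il: "i < n" "l < n" by (auto simp: sum_mats_def)
  have "(sum_mats n M S * N) $$ (i, l) = (\<Sum>q<n. (\<Sum>x\<in>S. M x $$ (i, q)) * N $$ (q, l))"
    using il N by (subst index_mult_mat_sum[of _ n n _ n]) (auto simp: sum_mats_def)
  also have "\<dots> = (\<Sum>x\<in>S. \<Sum>q<n. M x $$ (i, q) * N $$ (q, l))"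
    by (simp add: sum_distrib_right sum.swap[of _ S])
  also have "\<dots> = sum_mats n (\<lambda>x. M x * N) S $$ (i, l)"
    using il assms by (auto simp: sum_mats_def intro!: sum.cong index_mult_mat_sum[symmetric])
  finally show "(sum_mats n M S * N) $$ (i, l) = sum_mats n (\<lambda>x. M x * N) S $$ (i, l)" .
qed (use N in \<open>auto simp: sum_mats_def\<close>)

lemma mult_sum_mats:
  fixes N :: "'a :: semiring_0 mat"
  assumes "\<And>x. x \<in> S \<Longrightarrow> M x \<in> carrier_mat n n" and N: "N \<in> carrier_mat n n"
  shows "N * sum_mats n M S = sum_mats n (\<lambda>x. N * M x) S"
proof (rule eq_matI)
  fix i l assume "i < dim_row (sum_mats n (\<lambda>x. N * M x) S)" "l < dim_col (sum_mats n (\<lambda>x. N * M x) S)"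
  then have il: "i < n" "l < n" by (auto simp: sum_mats_def)
  have "(N * sum_mats n M S) $$ (i, l) = (\<Sum>q<n. N $$ (i, q) * (\<Sum>x\<in>S. M x $$ (q, l)))"
    using il N by (subst index_mult_mat_sum[of _ n n _ n]) (auto simp: sum_mats_def)
  also have "\<dots> = (\<Sum>x\<in>S. \<Sum>q<n. N $$ (i, q) * M x $$ (q, l))"
    by (simp add: sum_distrib_left sum.swap[of _ S])
  also have "\<dots> = sum_mats n (\<lambda>x. N * M x) S $$ (i, l)"
    using il assms by (auto simp: sum_mats_def intro!: sum.cong index_mult_mat_sum[symmetric])
  finally show "(N * sum_mats n M S) $$ (i, l) = sum_mats n (\<lambda>x. N * M x) S $$ (i, l)" .
qed (use N in \<open>auto simp: sum_mats_def\<close>)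

lemma mat_trace_sum_mats:
  "mat_trace (sum_mats n M S) = (\<Sum>x\<in>S. mat_trace (M x))" if "\<And>x. x \<in> S \<Longrightarrow> M x \<in> carrier_mat n n"
proof -
  have "mat_trace (sum_mats n M S) = (\<Sum>i<n. \<Sum>x\<in>S. M x $$ (i, i))"
    unfolding mat_trace_def sum_mats_def by simp
  also have "\<dots> = (\<Sum>x\<in>S. mat_trace (M x))"
    unfolding mat_trace_def using that by (subst sum.swap) (auto intro!: sum.cong)
  finally show ?thesis .
qed

section \<open>Representations and characters\<close>

lemma rep_pos: "is_rep G n \<rho> \<Longrightarrow> 0 < n"
  and rep_carrier: "is_rep G n \<rho> \<Longrightarrow> g \<in> carrier G \<Longrightarrow> \<rho> g \<in> carrier_mat n n"
  and rep_one: "is_rep G n \<rho> \<Longrightarrow> \<rho> \<one>\<^bsub>G\<^esub> = 1\<^sub>m n"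
  and rep_mult: "is_rep G n \<rho> \<Longrightarrow> g \<in> carrier G \<Longrightarrow> h \<in> carrier G \<Longrightarrow> \<rho> (g \<otimes>\<^bsub>G\<^esub> h) = \<rho> g * \<rho> h"
  unfolding is_rep_def by auto

lemma irr_rep_is_rep: "irr_rep G n \<rho> \<Longrightarrow> is_rep G n \<rho>"
  unfolding irr_rep_def by simp

context group
begin

lemma character_one: "is_rep G n \<rho> \<Longrightarrow> character_of G \<rho> \<one> = of_nat n"
  unfolding character_of_def mat_trace_def by (simp add: rep_one)

lemma rep_inv_mult: "is_rep G n \<rho> \<Longrightarrow> g \<in> carrier G \<Longrightarrow> \<rho> (inv g) * \<rho> g = 1\<^sub>m n"
  by (metis inv_closed l_inv rep_mult rep_one)

lemma rep_pow:
  assumes "is_rep G n \<rho>" "g \<in> carrier G"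
  shows "\<rho> (g [^] (k :: nat)) = \<rho> g ^\<^sub>m k"
proof (induction k)
  case 0
  show ?case using rep_carrier[OF assms] rep_one[OF assms(1)] by simp
next
  case (Suc k)
  then show ?case using rep_mult[OF assms(1) nat_pow_closed[OF assms(2)] assms(2)] by simp
qed

lemma rep_pow_order: "is_rep G n \<rho> \<Longrightarrow> g \<in> carrier G \<Longrightarrow> \<rho> g ^\<^sub>m Coset.order G = 1\<^sub>m n"
  by (metis pow_order_eq_1 rep_one rep_pow)

lemma rep_inv_eq_pow:
  assumes "is_rep G n \<rho>" "g \<in> carrier G" "finite (carrier G)"
  shows "\<rho> (inv g) = \<rho> g ^\<^sub>m (Coset.order G - 1)"
proof -
  have "g [^] (Coset.order G - 1) \<otimes> g = \<one>"
    using assms order_gt_0_iff_finite pow_order_eq_1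
    by (metis Suc_diff_1 nat_pow_Suc)
  then have "inv g = g [^] (Coset.order G - 1)"
    using assms(2) by (metis inv_equality nat_pow_closed)
  then show ?thesis using rep_pow[OF assms(1,2)] by simp
qed

lemma rep_commutator_eq_one_iff:
  assumes \<rho>: "is_rep G n \<rho>" and a: "a \<in> carrier G" and b: "b \<in> carrier G"
  shows "\<rho> (a \<otimes> b \<otimes> inv a \<otimes> inv b) = 1\<^sub>m n \<longleftrightarrow> \<rho> a * \<rho> b = \<rho> b * \<rho> a"
proof -
  have "a \<otimes> b \<otimes> inv a \<otimes> inv b = (a \<otimes> b) \<otimes> inv (b \<otimes> a)"
    using a b by (simp add: inv_mult_group m_assoc)
  then have "\<rho> (a \<otimes> b \<otimes> inv a \<otimes> inv b) * \<rho> (b \<otimes> a) = \<rho> (a \<otimes> b)"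
    using a b by (simp add: m_assoc rep_mult[OF \<rho>, symmetric])
  then show ?thesis
    using rep_carrier[OF \<rho>] rep_inv_mult[OF \<rho>] rep_mult[OF \<rho>] a b
    by (smt (verit) assoc_mult_mat inv_closed left_mult_one_mat m_closed right_mult_one_mat)
qed

lemma rep_similar:
  assumes \<sigma>: "is_rep G n \<sigma>" and P: "P \<in> carrier_mat n n" and Q: "Q \<in> carrier_mat n n"
    and QP: "Q * P = 1\<^sub>m n"
  shows "is_rep G n (\<lambda>g. Q * \<sigma> g * P)"
  unfolding is_rep_def
proof (intro conjI ballI)
  fix g h assume g: "g \<in> carrier G" and h: "h \<in> carrier G"
  have PQ: "P * Q = 1\<^sub>m n"
    using P Q QP by (metis mat_mult_left_right_inverse)
  have "Q * \<sigma> (g \<otimes> h) * P = Q * \<sigma> g * ((P * Q) * \<sigma> h * P)"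
    using P Q rep_carrier[OF \<sigma> g] rep_carrier[OF \<sigma> h] rep_mult[OF \<sigma> g h] unfolding PQ
    by (simp add: assoc_mult_mat[of _ n n _ n _ n])
  also have "\<dots> = Q * \<sigma> g * P * (Q * \<sigma> h * P)"
    using P Q rep_carrier[OF \<sigma> g] rep_carrier[OF \<sigma> h] by (simp add: assoc_mult_mat[of _ n n _ n _ n])
  finally show "Q * \<sigma> (g \<otimes> h) * P = Q * \<sigma> g * P * (Q * \<sigma> h * P)" .
qed (use assms in \<open>auto simp: rep_pos rep_one rep_carrier\<close>)

lemma sum_cmult_reindex:
  assumes "h \<in> carrier G"
  shows "(\<Sum>g\<in>carrier G. f (h \<otimes> g)) = (\<Sum>g\<in>carrier G. f g)"
  by (rule sum.reindex_bij_witness[where i = "\<lambda>g. inv h \<otimes> g" and j = "\<lambda>g. h \<otimes> g"])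
    (use assms in \<open>auto simp: m_assoc[symmetric]\<close>)

lemma sum_mats_cmult_reindex:
  assumes "h \<in> carrier G"
  shows "sum_mats n (\<lambda>g. M (h \<otimes> g)) (carrier G) = sum_mats n M (carrier G)"
  unfolding sum_mats_def using sum_cmult_reindex[OF assms, where f = "\<lambda>g. M g $$ ij" for ij] by simp

end

lemma schur_lemma_scalar:
  assumes irr: "irr_rep G n \<rho>" and A: "A \<in> carrier_mat n n"
    and comm: "\<And>g. g \<in> carrier G \<Longrightarrow> A * \<rho> g = \<rho> g * A"
  shows "\<exists>c. A = c \<cdot>\<^sub>m 1\<^sub>m n"
proof -
  note rc = rep_carrier[OF irr_rep_is_rep[OF irr]]
  from spectrum_non_empty[OF A rep_pos[OF irr_rep_is_rep[OF irr]]]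
  obtain c where "eigenvalue A c" unfolding spectrum_def by auto
  then obtain v where ev: "eigenvector A v c" unfolding eigenvalue_def by auto
  have v: "v \<in> carrier_vec n" "v \<noteq> 0\<^sub>v n" "A *\<^sub>v v = c \<cdot>\<^sub>v v" using ev A unfolding eigenvector_def by auto
  define W where "W = {w \<in> carrier_vec n. A *\<^sub>v w = c \<cdot>\<^sub>v w}"
  have W: "invariant_subspace G n \<rho> W"
    unfolding invariant_subspace_def
  proof (intro conjI ballI allI)
    show "W \<subseteq> carrier_vec n" unfolding W_def by auto
    show "0\<^sub>v n \<in> W" unfolding W_def using A by auto
    fix x y assume x: "x \<in> W" and y: "y \<in> W"
    then show "x + y \<in> W" unfolding W_def using A
      by (auto simp: mult_add_distrib_mat_vec smult_add_distrib_vec)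
  next
    fix d x assume x: "x \<in> W"
    then show "d \<cdot>\<^sub>v x \<in> W" unfolding W_def using A
      by (auto simp: mult_mat_vec smult_smult_assoc mult.commute)
  next
    fix g x assume g: "g \<in> carrier G" and x: "x \<in> W"
    have xc: "x \<in> carrier_vec n" and ax: "A *\<^sub>v x = c \<cdot>\<^sub>v x" using x unfolding W_def by auto
    have "A *\<^sub>v (\<rho> g *\<^sub>v x) = (A * \<rho> g) *\<^sub>v x" using A rc[OF g] xc by simp
    also have "\<dots> = (\<rho> g * A) *\<^sub>v x" using comm g by simp
    also have "\<dots> = \<rho> g *\<^sub>v (c \<cdot>\<^sub>v x)" using A rc[OF g] xc ax by simp
    also have "\<dots> = c \<cdot>\<^sub>v (\<rho> g *\<^sub>v x)" using rc[OF g] xc by (simp add: mult_mat_vec)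
    finally show "\<rho> g *\<^sub>v x \<in> W" unfolding W_def using rc[OF g] xc by auto
  qed
  have "v \<in> W" using v unfolding W_def by auto
  with W irr v(2) have W_full: "W = carrier_vec n" unfolding irr_rep_def by auto
  have "A = c \<cdot>\<^sub>m 1\<^sub>m n"
  proof (rule eq_matI)
    fix i j assume i: "i < dim_row (c \<cdot>\<^sub>m 1\<^sub>m n)" and j: "j < dim_col (c \<cdot>\<^sub>m 1\<^sub>m n)"
    have "unit_vec n j \<in> W" using W_full j by auto
    then have e: "A *\<^sub>v unit_vec n j = c \<cdot>\<^sub>v unit_vec n j" unfolding W_def by auto
    have "A $$ (i, j) = (A *\<^sub>v unit_vec n j) $ i" using A i j by (simp add: mult_mat_vec_def)
    also have "\<dots> = (c \<cdot>\<^sub>m 1\<^sub>m n) $$ (i, j)" unfolding e using i j by auto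
    finally show "A $$ (i, j) = (c \<cdot>\<^sub>m 1\<^sub>m n) $$ (i, j)" .
  qed (use A in auto)
  then show ?thesis by blast
qed

(* The averaging operator of the classical proof of the orthogonality relations: it intertwines \<rho>
   with itself, so for irreducible \<rho> it is a scalar, which is read off from its trace. *)
definition rep_average :: "('a, 'b) monoid_scheme \<Rightarrow> nat \<Rightarrow> ('a \<Rightarrow> complex mat) \<Rightarrow> complex mat \<Rightarrow> complex mat"
  where "rep_average G n \<rho> A = sum_mats n (\<lambda>g. \<rho> g * A * \<rho> (inv\<^bsub>G\<^esub> g)) (carrier G)"

context group
begin

lemma rep_average_commutes:
  assumes \<rho>: "is_rep G n \<rho>" and A: "A \<in> carrier_mat n n" and h: "h \<in> carrier G"
  shows "rep_average G n \<rho> A * \<rho> h = \<rho> h * rep_average G n \<rho> A"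
proof -
  note c = rep_carrier[OF \<rho>]
  have conj: "\<rho> g * A * \<rho> (inv g) \<in> carrier_mat n n" if "g \<in> carrier G" for g
    using mult_carrier_mat[OF mult_carrier_mat[OF c[OF that] A] c[OF inv_closed[OF that]]] .
  have shift: "\<rho> (h \<otimes> g) * A * \<rho> (inv (h \<otimes> g)) * \<rho> h = \<rho> h * (\<rho> g * A * \<rho> (inv g))"
    if g: "g \<in> carrier G" for g
  proof -
    have "\<rho> (h \<otimes> g) = \<rho> h * \<rho> g" "\<rho> (inv (h \<otimes> g)) = \<rho> (inv g) * \<rho> (inv h)"
      using g h by (simp_all add: rep_mult[OF \<rho>] inv_mult_group)
    moreover have "\<rho> (inv h) * \<rho> h = 1\<^sub>m n"
      using rep_inv_mult[OF \<rho> h] .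
    ultimately show ?thesis
      using A c[OF g] c[OF h] c[OF inv_closed[OF g]] c[OF inv_closed[OF h]]
      by (simp add: assoc_mult_mat[of _ n n _ n _ n])
  qed
  have "rep_average G n \<rho> A * \<rho> h = sum_mats n (\<lambda>g. \<rho> g * A * \<rho> (inv g) * \<rho> h) (carrier G)"
    unfolding rep_average_def
    by (rule sum_mats_mult[where M = "\<lambda>g. \<rho> g * A * \<rho> (inv g)"]) (use conj c h in auto)
  also have "\<dots> = sum_mats n (\<lambda>g. \<rho> (h \<otimes> g) * A * \<rho> (inv (h \<otimes> g)) * \<rho> h) (carrier G)"
    by (rule sum_mats_cmult_reindex[OF h, of n "\<lambda>g. \<rho> g * A * \<rho> (inv g) * \<rho> h", symmetric])
  also have "\<dots> = sum_mats n (\<lambda>g. \<rho> h * (\<rho> g * A * \<rho> (inv g))) (carrier G)"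
    by (rule sum_mats_cong) (rule shift)
  also have "\<dots> = \<rho> h * rep_average G n \<rho> A"
    unfolding rep_average_def
    by (rule mult_sum_mats[where M = "\<lambda>g. \<rho> g * A * \<rho> (inv g)", symmetric]) (use conj c h in auto)
  finally show ?thesis .
qed

lemma mat_trace_rep_average:
  assumes \<rho>: "is_rep G n \<rho>" and A: "A \<in> carrier_mat n n"
  shows "mat_trace (rep_average G n \<rho> A) = of_nat (Coset.order G) * mat_trace A"
proof -
  note c = rep_carrier[OF \<rho>]
  have "mat_trace (\<rho> g * A * \<rho> (inv g)) = mat_trace A" if g: "g \<in> carrier G" for g
  proof -
    have "mat_trace (\<rho> g * A * \<rho> (inv g)) = mat_trace (\<rho> g * (A * \<rho> (inv g)))"
      using A c g by (simp add: assoc_mult_mat[of _ n n _ n _ n])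
    also have "\<dots> = mat_trace (A * (\<rho> (inv g) * \<rho> g))"
      using A c g by (subst mat_trace_mult_comm[of _ n n]) (auto simp: assoc_mult_mat[of _ n n _ n _ n])
    finally show ?thesis using A g rep_inv_mult[OF \<rho>] by simp
  qed
  then show ?thesis
    unfolding rep_average_def Coset.order_def using A c
    by (subst mat_trace_sum_mats[where n = n]) (auto intro!: mult_carrier_mat)
qed

lemma rep_average_of_irr:
  assumes irr: "irr_rep G n \<rho>" and A: "A \<in> carrier_mat n n"
  shows "rep_average G n \<rho> A = (of_nat (Coset.order G) * mat_trace A / of_nat n) \<cdot>\<^sub>m 1\<^sub>m n"
proof -
  note \<rho> = irr_rep_is_rep[OF irr]
  obtain c where c: "rep_average G n \<rho> A = c \<cdot>\<^sub>m 1\<^sub>m n"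
    using schur_lemma_scalar[OF irr _ rep_average_commutes[OF \<rho> A]]
    unfolding rep_average_def by auto
  have "of_nat n * c = of_nat (Coset.order G) * mat_trace A"
    using mat_trace_rep_average[OF \<rho> A] unfolding c mat_trace_def by simp
  then have "c = of_nat (Coset.order G) * mat_trace A / of_nat n"
    using rep_pos[OF \<rho>] by (simp add: field_simps)
  then show ?thesis using c by simp
qed

lemma rep_coeff_orthogonality:
  assumes irr: "irr_rep G n \<rho>" and ijkl: "i < n" "j < n" "k < n" "l < n"
  shows "(\<Sum>g\<in>carrier G. \<rho> g $$ (i, j) * \<rho> (inv g) $$ (k, l))
    = (if i = l \<and> j = k then of_nat (Coset.order G) / of_nat n else 0)"
proof -
  note \<rho> = irr_rep_is_rep[OF irr]
  define E where "E = mat n n (\<lambda>(a, b). if a = j \<and> b = k then 1 else (0 :: complex))"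
  have E: "E \<in> carrier_mat n n" unfolding E_def by simp
  have trace_E: "mat_trace E = (if j = k then 1 else 0)"
    unfolding mat_trace_def E_def using ijkl by (cases "j = k") simp_all
  have "(\<Sum>g\<in>carrier G. \<rho> g $$ (i, j) * \<rho> (inv g) $$ (k, l)) = rep_average G n \<rho> E $$ (i, l)"
    unfolding rep_average_def sum_mats_def E_def using ijkl rep_carrier[OF \<rho>]
    by (auto simp: index_mult_single_entry_mult intro!: sum.cong)
  also have "\<dots> = (if i = l \<and> j = k then of_nat (Coset.order G) / of_nat n else 0)"
    unfolding rep_average_of_irr[OF irr E] trace_E using ijkl by simp
  finally show ?thesis .
qed

lemma character_orthogonality:
  assumes irr: "irr_rep G n \<rho>"
  shows "(\<Sum>g\<in>carrier G. character_of G \<rho> g * character_of G \<rho> (inv g)) = of_nat (Coset.order G)"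
proof -
  note \<rho> = irr_rep_is_rep[OF irr]
  have "(\<Sum>g\<in>carrier G. character_of G \<rho> g * character_of G \<rho> (inv g))
      = (\<Sum>g\<in>carrier G. (\<Sum>i<n. \<rho> g $$ (i, i)) * (\<Sum>k<n. \<rho> (inv g) $$ (k, k)))"
    unfolding character_of_def mat_trace_def
    by (intro sum.cong refl) (simp add: carrier_matD(1)[OF rep_carrier[OF \<rho>]])
  also have "\<dots> = (\<Sum>i<n. \<Sum>k<n. \<Sum>g\<in>carrier G. \<rho> g $$ (i, i) * \<rho> (inv g) $$ (k, k))"
    by (simp add: sum_product sum.swap[of _ "carrier G"])
  also have "\<dots> = (\<Sum>i<n. \<Sum>k<n. if i = k then of_nat (Coset.order G) / of_nat n else 0)"
    using rep_coeff_orthogonality[OF irr] by (auto intro!: sum.cong)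
  also have "\<dots> = of_nat (Coset.order G)"
    using rep_pos[OF \<rho>] by simp
  finally show ?thesis .
qed

lemma character_inv_eq_cnj:
  assumes \<rho>: "is_rep G n \<rho>" and fin: "finite (carrier G)" and g: "g \<in> carrier G"
  shows "character_of G \<rho> (inv g) = cnj (character_of G \<rho> g)"
proof -
  have "mat_trace (\<rho> (inv g)) = mat_trace (\<rho> g ^\<^sub>m (Coset.order G - 1))"
    using rep_inv_eq_pow[OF \<rho> g fin] by simp
  also have "\<dots> = cnj (mat_trace (\<rho> g))"
    using mat_trace_pow_pred_eq_cnj[OF rep_carrier[OF \<rho> g] rep_pow_order[OF \<rho> g]] fin
    by (simp add: order_gt_0_iff_finite)
  finally show ?thesis unfolding character_of_def using g by simp
qed

lemma sum_cmod_character_sq: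
  assumes irr: "irr_rep G n \<rho>" and fin: "finite (carrier G)"
  shows "(\<Sum>g\<in>carrier G. (cmod (character_of G \<rho> g))\<^sup>2) = real (Coset.order G)"
proof -
  have "complex_of_real (\<Sum>g\<in>carrier G. (cmod (character_of G \<rho> g))\<^sup>2)
      = (\<Sum>g\<in>carrier G. character_of G \<rho> g * character_of G \<rho> (inv g))"
    by (simp add: character_inv_eq_cnj[OF irr_rep_is_rep[OF irr] fin] complex_norm_square[symmetric])
  also have "\<dots> = of_nat (Coset.order G)"
    by (rule character_orthogonality[OF irr])
  finally show ?thesis by (metis of_real_eq_iff of_real_of_nat_eq)
qed

(* Sum |\<chi>|\<^sup>2 over G: the GVZ property kills the terms outside Z(\<chi>), and each term in Z(\<chi>) is \<chi>(1)\<^sup>2. *)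
lemma GVZ_card_char_center:
  assumes gvz: "GVZ G" and irr: "irr_rep G n \<rho>" and fin: "finite (carrier G)"
  shows "card (char_center G (character_of G \<rho>)) * n\<^sup>2 = Coset.order G"
proof -
  let ?\<chi> = "character_of G \<rho>"
  let ?Z = "char_center G ?\<chi>"
  have Z: "?Z \<subseteq> carrier G" unfolding char_center_def by auto
  have "real (Coset.order G) = (\<Sum>g\<in>carrier G. (cmod (?\<chi> g))\<^sup>2)"
    using sum_cmod_character_sq[OF irr fin] by simp
  also have "\<dots> = (\<Sum>g\<in>?Z. (cmod (?\<chi> g))\<^sup>2)"
    using gvz irr Z fin unfolding GVZ_def Irr_def
    by (intro sum.mono_neutral_right) auto
  also have "\<dots> = (\<Sum>g\<in>?Z. (real n)\<^sup>2)"
    unfolding char_center_def using character_one[OF irr_rep_is_rep[OF irr]] by simp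
  finally show ?thesis by (metis of_nat_eq_iff of_nat_mult of_nat_power sum_constant)
qed

lemma central_image_in_char_center:
  assumes irr: "irr_rep G n \<rho>" and fin: "finite (carrier G)" and z: "z \<in> carrier G"
    and comm: "\<And>g. g \<in> carrier G \<Longrightarrow> \<rho> z * \<rho> g = \<rho> g * \<rho> z"
  shows "z \<in> char_center G (character_of G \<rho>)"
proof -
  note \<rho> = irr_rep_is_rep[OF irr]
  obtain c where c: "\<rho> z = c \<cdot>\<^sub>m 1\<^sub>m n"
    using schur_lemma_scalar[OF irr rep_carrier[OF \<rho> z] comm] by blast
  have "upper_triangular (c \<cdot>\<^sub>m 1\<^sub>m n)" by (auto simp: upper_triangular_def)
  then have "((c \<cdot>\<^sub>m 1\<^sub>m n) ^\<^sub>m Coset.order G) $$ (0, 0) = c ^ Coset.order G"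
    using upper_triangular_pow[of "c \<cdot>\<^sub>m 1\<^sub>m n" n] rep_pos[OF \<rho>] by auto
  then have "c ^ Coset.order G = 1"
    using rep_pow_order[OF \<rho> z] rep_pos[OF \<rho>] unfolding c by simp
  then have "cmod c = 1"
    using fin power_eq_imp_eq_base[of "cmod c" "Coset.order G" 1]
    by (simp add: norm_power[symmetric] order_gt_0_iff_finite)
  then have "cmod (character_of G \<rho> z) = real n"
    unfolding character_of_def mat_trace_def c using z by (simp add: norm_mult)
  then show ?thesis
    unfolding char_center_def using z character_one[OF \<rho>] by simp
qed

end

section \<open>Reducible representations\<close>

context vec_space
begin

lemma maximal_lin_indpt_subset_spans:
  assumes W: "submodule class_ring W V" and maxB: "maximal B (\<lambda>S. S \<subseteq> W \<and> lin_indpt S)"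
  shows "span B = W"
proof
  have BW: "B \<subseteq> W" and liB: "lin_indpt B" using maxB unfolding maximal_def by auto
  have BC: "B \<subseteq> carrier_vec n" using BW submodule.subset[OF W] by auto
  show "span B \<subseteq> W" using span_is_subset[OF BW W] .
  show "W \<subseteq> span B"
  proof
    fix w assume w: "w \<in> W"
    show "w \<in> span B"
    proof (rule ccontr)
      assume nw: "w \<notin> span B"
      have wB: "w \<notin> B" using nw in_own_span[OF BC] by auto
      have "lin_indpt (B \<union> {w})"
        using lin_dep_iff_in_span[OF _ liB _ wB] BC w submodule.subset[OF W] nw by auto
      then have "B \<union> {w} = B" using maxB w BW unfolding maximal_def by blast
      then show False using wB by auto
    qed
  qed
qed

lemma lin_indpt_extends_to_basis:
  assumes BC: "B \<subseteq> carrier_vec n" and liB: "lin_indpt B"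
  obtains C where "finite C" "B \<subseteq> C" "basis C"
proof -
  have bound: "\<And>S. S \<subseteq> carrier_vec n \<and> lin_indpt S \<Longrightarrow> finite S \<and> card S \<le> n"
    using li_le_dim[OF fin_dim] dim_is_n by auto
  obtain C where finC: "finite C" and maxC: "maximal C (\<lambda>S. B \<subseteq> S \<and> S \<subseteq> carrier_vec n \<and> lin_indpt S)"
    using maximal_exists[of "\<lambda>S. B \<subseteq> S \<and> S \<subseteq> carrier_vec n \<and> lin_indpt S" n B] bound BC liB by blast
  then have BsC: "B \<subseteq> C" unfolding maximal_def by auto
  have "maximal C (\<lambda>S. S \<subseteq> carrier_vec n \<and> lin_indpt S)"
    unfolding maximal_def
  proof (intro conjI allI impI)
    show "C \<subseteq> carrier_vec n" "lin_indpt C" using maxC unfolding maximal_def by auto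
    fix S assume "C \<subseteq> S \<and> S \<subseteq> carrier_vec n \<and> lin_indpt S"
    then show "S = C" using maxC BsC unfolding maximal_def by (metis subset_trans)
  qed
  then have "basis C" by (rule max_li_is_basis)
  with finC BsC show ?thesis using that by blast
qed

lemma subspace_basis_extension:
  assumes W: "submodule class_ring W V" and ne: "W \<noteq> {0\<^sub>v n}" and nf: "W \<noteq> carrier_vec n"
  obtains bs cs where "set bs \<subseteq> W" "span (set bs) = W" "distinct (bs @ cs)" "basis (set (bs @ cs))"
    "length (bs @ cs) = n" "0 < length bs" "length bs < n"
proof -
  have WC: "W \<subseteq> carrier_vec n" using submodule.subset[OF W] by simp
  have bound: "\<And>S. S \<subseteq> carrier_vec n \<and> lin_indpt S \<Longrightarrow> finite S \<and> card S \<le> n"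
    using li_le_dim[OF fin_dim] dim_is_n by auto
  have "lin_indpt {}"
    unfolding lin_dep_def by auto
  then obtain B where finB: "finite B" and maxB: "maximal B (\<lambda>S. S \<subseteq> W \<and> lin_indpt S)"
    using maximal_exists[of "\<lambda>S. S \<subseteq> W \<and> lin_indpt S" n "{}"] bound WC by blast
  have BW: "B \<subseteq> W" and liB: "lin_indpt B" using maxB unfolding maximal_def by auto
  have spanB: "span B = W" by (rule maximal_lin_indpt_subset_spans[OF W maxB])
  obtain C where finC: "finite C" and BsC: "B \<subseteq> C" and basC: "basis C"
    using lin_indpt_extends_to_basis[of B] BW WC liB by blast
  obtain bs where bs: "set bs = B" "distinct bs" using finite_distinct_list[OF finB] by blast
  obtain cs where cs: "set cs = C - B" "distinct cs" using finite_distinct_list[of "C - B"] finC by blast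
  have vs: "set (bs @ cs) = C" "distinct (bs @ cs)" using bs cs BsC by auto
  have "card C = n" using dim_basis[OF finC basC] dim_is_n by simp
  then have len: "length (bs @ cs) = n"
    using distinct_card[OF vs(2)] vs(1) by simp
  have pos: "0 < length bs"
  proof (rule ccontr)
    assume "\<not> 0 < length bs"
    then have "B = {}" using bs by simp
    then show False using spanB ne span_empty by simp
  qed
  have less: "length bs < n"
  proof (rule ccontr)
    assume "\<not> length bs < n"
    then have "card B \<ge> dim"
      using dim_is_n distinct_card[OF bs(2)] bs(1) by simp
    then have "basis B"
      using dim_li_is_basis[OF fin_dim finB _ liB] BW WC by blast
    then show False using spanB nf unfolding basis_def by simp
  qed
  show ?thesis
    by (rule that[of bs cs]) (use bs BW spanB vs len pos less basC in simp_all)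
qed

lemma basis_change_adapted_to_span:
  assumes dist: "distinct (bs @ cs)" and bas: "basis (set (bs @ cs))" and len: "length (bs @ cs) = n"
  obtains P Q where "P \<in> carrier_mat n n" "Q \<in> carrier_mat n n" "P * Q = 1\<^sub>m n" "Q * P = 1\<^sub>m n"
    "\<And>j. j < length bs \<Longrightarrow> col P j = bs ! j"
    "\<And>w i. w \<in> span (set bs) \<Longrightarrow> length bs \<le> i \<Longrightarrow> i < n \<Longrightarrow> (Q *\<^sub>v w) $ i = 0"
proof -
  let ?k = "length bs"
  have vsC: "set (bs @ cs) \<subseteq> carrier_vec n" and li: "lin_indpt (set (bs @ cs))"
    using bas unfolding basis_def by auto
  define P where "P = mat_of_cols n (bs @ cs)"
  have P: "P \<in> carrier_mat n n" unfolding P_def using len by auto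
  have "det P \<noteq> 0"
  proof
    assume "det P = 0"
    then obtain v where "v \<in> carrier_vec n" "v \<noteq> 0\<^sub>v n" "P *\<^sub>v v = 0\<^sub>v n"
      using det_0_iff_vec_prod_zero_field[OF P] by blast
    then have "lin_dep (set (cols P))"
      using lin_depI[OF P] dist vsC unfolding P_def by simp
    then show False using li vsC unfolding P_def by simp
  qed
  then obtain Q where Q: "Q \<in> carrier_mat n n" "Q * P = 1\<^sub>m n" "P * Q = 1\<^sub>m n"
    using det_non_zero_imp_unit[OF P, of undefined] unfolding Units_def ring_mat_def by auto
  have col: "col P j = bs ! j" if "j < ?k" for j
    unfolding P_def using that len vsC by (subst col_mat_of_cols) (auto simp: nth_append)
  define U where "U = {w \<in> carrier_vec n. \<forall>i. ?k \<le> i \<and> i < n \<longrightarrow> (Q *\<^sub>v w) $ i = 0}"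
  have "Q *\<^sub>v 0\<^sub>v n = 0\<^sub>v n" using Q(1) by (intro eq_vecI) auto
  then have "submodule class_ring U V"
    by unfold_locales (auto simp del: index_mult_mat_vec
      simp: U_def mult_add_distrib_mat_vec[OF Q(1)] mult_mat_vec[OF Q(1)] carrier_matD[OF Q(1)])
  moreover have "set bs \<subseteq> U"
  proof
    fix b assume "b \<in> set bs"
    then obtain j where j: "j < ?k" "b = bs ! j" by (metis in_set_conv_nth)
    have "Q *\<^sub>v b = col (Q * P) j" using col_mult2[OF Q(1) P, of j] j col len by simp
    also have "\<dots> = unit_vec n j" using Q j len by simp
    finally show "b \<in> U" unfolding U_def using j len vsC by auto
  qed
  ultimately have "span (set bs) \<subseteq> U" by (rule span_is_subset[rotated])
  then show ?thesis using that[OF P Q(1) Q(3) Q(2) col] unfolding U_def by blast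
qed

end

context group
begin

lemma rep_diagonal_blocks:
  assumes \<tau>: "is_rep G (k + m) \<tau>" and k: "0 < k" and m: "0 < m"
    and blocks: "\<And>g. g \<in> carrier G \<Longrightarrow> \<tau> g = four_block_mat (A g) (B g) (0\<^sub>m m k) (D g)"
    and A: "\<And>g. g \<in> carrier G \<Longrightarrow> A g \<in> carrier_mat k k"
    and B: "\<And>g. g \<in> carrier G \<Longrightarrow> B g \<in> carrier_mat k m"
    and D: "\<And>g. g \<in> carrier G \<Longrightarrow> D g \<in> carrier_mat m m"
  shows "is_rep G k A \<and> is_rep G m D"
proof -
  have "four_block_mat (A \<one>) (B \<one>) (0\<^sub>m m k) (D \<one>) = four_block_mat (1\<^sub>m k) (0\<^sub>m k m) (0\<^sub>m m k) (1\<^sub>m m)"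
    using blocks[OF one_closed] rep_one[OF \<tau>] four_block_one_mat[of k m] by metis
  then have one: "A \<one> = 1\<^sub>m k \<and> D \<one> = 1\<^sub>m m"
    using four_block_mat_inject[OF A[OF one_closed] B[OF one_closed] zero_carrier_mat D[OF one_closed]
        one_carrier_mat zero_carrier_mat zero_carrier_mat one_carrier_mat]
    by simp
  have mult: "A (g \<otimes> h) = A g * A h \<and> D (g \<otimes> h) = D g * D h"
    if g: "g \<in> carrier G" and h: "h \<in> carrier G" for g h
  proof -
    have "four_block_mat (A (g \<otimes> h)) (B (g \<otimes> h)) (0\<^sub>m m k) (D (g \<otimes> h)) = \<tau> g * \<tau> h"
      using blocks g h rep_mult[OF \<tau> g h] by simp
    also have "\<dots> = four_block_mat (A g * A h + B g * 0\<^sub>m m k) (A g * B h + B g * D h)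
        (0\<^sub>m m k * A h + D g * 0\<^sub>m m k) (0\<^sub>m m k * B h + D g * D h)"
      unfolding blocks[OF g] blocks[OF h]
      by (rule mult_four_block_mat) (use A[OF g] A[OF h] B[OF g] B[OF h] D[OF g] D[OF h] in auto)
    also have "\<dots> = four_block_mat (A g * A h) (A g * B h + B g * D h) (0\<^sub>m m k) (D g * D h)"
      using A[OF g] A[OF h] B[OF g] B[OF h] D[OF g] D[OF h] by (intro cong_four_block_mat) auto
    finally show ?thesis
      using four_block_mat_inject[OF A[OF m_closed[OF g h]] B[OF m_closed[OF g h]] zero_carrier_mat
          D[OF m_closed[OF g h]] mult_carrier_mat[OF A[OF g] A[OF h]]
          add_carrier_mat[OF mult_carrier_mat[OF B[OF g] D[OF h]]]
          zero_carrier_mat mult_carrier_mat[OF D[OF g] D[OF h]]]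
      by simp
  qed
  show ?thesis unfolding is_rep_def using one mult k m A D by auto
qed

lemma reducible_rep_block_triangular:
  assumes \<sigma>: "is_rep G n \<sigma>"
    and W: "invariant_subspace G n \<sigma> W" "W \<noteq> {0\<^sub>v n}" "W \<noteq> carrier_vec n"
  obtains k P Q A B D where "0 < k" "k < n" "P \<in> carrier_mat n n" "Q \<in> carrier_mat n n"
    "P * Q = 1\<^sub>m n" "Q * P = 1\<^sub>m n" "is_rep G k A"
    "\<And>g. g \<in> carrier G \<Longrightarrow> B g \<in> carrier_mat k (n - k)" "is_rep G (n - k) D"
    "\<And>g. g \<in> carrier G \<Longrightarrow> Q * \<sigma> g * P = four_block_mat (A g) (B g) (0\<^sub>m (n - k) k) (D g)"
proof -
  interpret V: vec_space "TYPE(complex)" n .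
  have "submodule class_ring W V.V"
    using W(1) unfolding invariant_subspace_def by unfold_locales auto
  then obtain bs cs where bs: "set bs \<subseteq> W" "V.span (set bs) = W" and k: "0 < length bs" "length bs < n"
    and basis: "distinct (bs @ cs)" "V.basis (set (bs @ cs))" "length (bs @ cs) = n"
    using V.subspace_basis_extension W(2,3) by metis
  obtain P Q where PQ: "P \<in> carrier_mat n n" "Q \<in> carrier_mat n n" "P * Q = 1\<^sub>m n" "Q * P = 1\<^sub>m n"
    and col: "\<And>j. j < length bs \<Longrightarrow> col P j = bs ! j"
    and coord: "\<And>w i. w \<in> W \<Longrightarrow> length bs \<le> i \<Longrightarrow> i < n \<Longrightarrow> (Q *\<^sub>v w) $ i = 0"
    using V.basis_change_adapted_to_span[OF basis] bs(2) by metis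
  define k where "k = length bs"
  define \<tau> where "\<tau> g = Q * \<sigma> g * P" for g
  have \<tau>: "is_rep G n \<tau>" unfolding \<tau>_def by (rule rep_similar[OF \<sigma> PQ(1,2,4)])
  have \<tau>_lower: "\<tau> g $$ (i, j) = 0" if g: "g \<in> carrier G" and "k \<le> i" "i < n" "j < k" for g i j
  proof -
    have "col (\<tau> g) j = Q *\<^sub>v (\<sigma> g *\<^sub>v col P j)"
      unfolding \<tau>_def using PQ rep_carrier[OF \<sigma> g] that k
      by (simp add: col_mult2[of _ n n _ n] assoc_mult_mat_vec)
    moreover have "col P j \<in> W"
      using col[of j] bs(1) nth_mem[of j bs] that unfolding k_def by auto
    then have "\<sigma> g *\<^sub>v col P j \<in> W"
      using W(1) g unfolding invariant_subspace_def by blast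
    ultimately have "col (\<tau> g) j $ i = 0"
      using coord that unfolding k_def by simp
    then show ?thesis
      using rep_carrier[OF \<tau> g] that k unfolding k_def by simp
  qed
  define A where "A g = mat k k (\<lambda>(i, j). \<tau> g $$ (i, j))" for g
  define B where "B g = mat k (n - k) (\<lambda>(i, j). \<tau> g $$ (i, j + k))" for g
  define D where "D g = mat (n - k) (n - k) (\<lambda>(i, j). \<tau> g $$ (i + k, j + k))" for g
  have blocks: "\<tau> g = four_block_mat (A g) (B g) (0\<^sub>m (n - k) k) (D g)" if g: "g \<in> carrier G" for g
    using rep_carrier[OF \<tau> g] \<tau>_lower[OF g] k unfolding k_def A_def B_def D_def
    by (intro eq_matI) auto
  have kn: "0 < k" "k < n" using k unfolding k_def by auto
  have "is_rep G (k + (n - k)) \<tau>" using \<tau> kn by simp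
  then have reps: "is_rep G k A \<and> is_rep G (n - k) D"
    by (rule rep_diagonal_blocks[OF _ kn(1) _ blocks]) (use kn in \<open>auto simp: A_def B_def D_def\<close>)
  have B: "B g \<in> carrier_mat k (n - k)" for g unfolding B_def by simp
  have "Q * \<sigma> g * P = four_block_mat (A g) (B g) (0\<^sub>m (n - k) k) (D g)"
    if "g \<in> carrier G" for g
    using blocks[OF that] unfolding \<tau>_def .
  from that[OF kn PQ conjunct1[OF reps] B conjunct2[OF reps] this] show ?thesis .
qed

lemma rep_eq_one_if_diagonal_blocks_eq_one:
  assumes fin: "finite (carrier G)" and \<sigma>: "is_rep G n \<sigma>" and k: "k < n"
    and PQ: "P \<in> carrier_mat n n" "Q \<in> carrier_mat n n" "P * Q = 1\<^sub>m n" "Q * P = 1\<^sub>m n"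
    and B: "\<And>g. g \<in> carrier G \<Longrightarrow> B g \<in> carrier_mat k (n - k)"
    and blocks: "\<And>g. g \<in> carrier G \<Longrightarrow> Q * \<sigma> g * P = four_block_mat (A g) (B g) (0\<^sub>m (n - k) k) (D g)"
    and c: "c \<in> carrier G" "A c = 1\<^sub>m k" "D c = 1\<^sub>m (n - k)"
  shows "\<sigma> c = 1\<^sub>m n"
proof -
  have n: "k + (n - k) = n" using k by simp
  have unitri: "Q * \<sigma> c * P = four_block_mat (1\<^sub>m k) (B c) (0\<^sub>m (n - k) k) (1\<^sub>m (n - k))"
    using blocks c by simp
  have "(Q * \<sigma> c * P) ^\<^sub>m Coset.order G = 1\<^sub>m n"
    using rep_pow_order[OF rep_similar[OF \<sigma> PQ(1,2,4)] c(1)] .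
  then have "four_block_mat (1\<^sub>m k) (B c) (0\<^sub>m (n - k) k) (1\<^sub>m (n - k)) = 1\<^sub>m (k + (n - k))"
    using unitriangular_four_block_eq_one[OF B[OF c(1)]] fin unitri n
    by (simp add: order_gt_0_iff_finite)
  then have "Q * \<sigma> c * P = 1\<^sub>m n"
    using unitri n by simp
  then show ?thesis
    using conj_eq_one_imp_eq_one[OF PQ(1,2) _ PQ(3)] rep_carrier[OF \<sigma> c(1)] by simp
qed

(* Induction on the degree: a reducible representation is block triangular, by induction both
   diagonal blocks have abelian image, so commutators become unitriangular, and a unitriangular
   matrix of finite order is the identity. *)
lemma rep_commutes_if_irr_reps_linear:
  assumes fin: "finite (carrier G)" and N: "N \<subseteq> carrier G"
    and linear: "\<And>m \<rho>. irr_rep G m \<rho> \<Longrightarrow> \<forall>h\<in>N. \<rho> h = 1\<^sub>m m \<Longrightarrow> m = 1"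
    and \<sigma>: "is_rep G n \<sigma>" "\<forall>h\<in>N. \<sigma> h = 1\<^sub>m n"
    and a: "a \<in> carrier G" and b: "b \<in> carrier G"
  shows "\<sigma> a * \<sigma> b = \<sigma> b * \<sigma> a"
  using \<sigma>
proof (induction n arbitrary: \<sigma> rule: less_induct)
  case (less n \<sigma>)
  note \<sigma> = less.prems(1) and ker = less.prems(2)
  show ?case
  proof (cases "irr_rep G n \<sigma>")
    case True
    then have "n = 1" using linear ker by blast
    then show ?thesis using rep_carrier[OF \<sigma>] a b mat_1x1_mult_comm by blast
  next
    case False
    then obtain W where W: "invariant_subspace G n \<sigma> W" "W \<noteq> {0\<^sub>v n}" "W \<noteq> carrier_vec n"
      using \<sigma> unfolding irr_rep_def by blast
    show ?thesis
    proof (rule reducible_rep_block_triangular[OF \<sigma> W])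
      fix k P Q A B D
      assume k: "0 < k" "k < n"
        and PQ: "P \<in> carrier_mat n n" "Q \<in> carrier_mat n n" "P * Q = 1\<^sub>m n" "Q * P = 1\<^sub>m n"
        and A: "is_rep G k A" and B: "\<And>g. g \<in> carrier G \<Longrightarrow> B g \<in> carrier_mat k (n - k)"
        and D: "is_rep G (n - k) D"
        and blocks: "\<And>g. g \<in> carrier G \<Longrightarrow> Q * \<sigma> g * P = four_block_mat (A g) (B g) (0\<^sub>m (n - k) k) (D g)"
      have n: "k + (n - k) = n" using k by simp
      have "A h = 1\<^sub>m k \<and> D h = 1\<^sub>m (n - k)" if h: "h \<in> N" for h
      proof -
        have "four_block_mat (A h) (B h) (0\<^sub>m (n - k) k) (D h)
            = four_block_mat (1\<^sub>m k) (0\<^sub>m k (n - k)) (0\<^sub>m (n - k) k) (1\<^sub>m (n - k))"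
          using blocks[of h] ker h N PQ n by auto
        moreover have hG: "h \<in> carrier G" using h N by blast
        ultimately show ?thesis
          using four_block_mat_inject[OF rep_carrier[OF A hG] B[OF hG] zero_carrier_mat rep_carrier[OF D hG]
              one_carrier_mat zero_carrier_mat zero_carrier_mat one_carrier_mat]
          by simp
      qed
      then have "A a * A b = A b * A a" "D a * D b = D b * D a"
        using less.IH[OF k(2) A] less.IH[OF _ D] k by auto
      then have "A (a \<otimes> b \<otimes> inv a \<otimes> inv b) = 1\<^sub>m k" "D (a \<otimes> b \<otimes> inv a \<otimes> inv b) = 1\<^sub>m (n - k)"
        using rep_commutator_eq_one_iff[OF A a b] rep_commutator_eq_one_iff[OF D a b] by auto
      then have "\<sigma> (a \<otimes> b \<otimes> inv a \<otimes> inv b) = 1\<^sub>m n"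
        using rep_eq_one_if_diagonal_blocks_eq_one[OF fin \<sigma> k(2) PQ B blocks] a b by simp
      then show ?thesis using rep_commutator_eq_one_iff[OF \<sigma> a b] by simp
    qed
  qed
qed

section \<open>A nonlinear representation trivial on a normal subgroup\<close>

lemma rcos_eq_iff:
  assumes "subgroup H G" "x \<in> carrier G" "y \<in> carrier G"
  shows "H #> x = H #> y \<longleftrightarrow> x \<otimes> inv y \<in> H"
  using assms by (metis repr_independence repr_independenceD subgroup.rcos_module_imp
      subgroup.rcos_module_rev is_group rcos_self)

lemma coset_permutation_matrices_rep:
  assumes N: "subgroup N G" and f: "bij_betw f {0..<m} (rcosets N)"
  shows "is_rep G m (\<lambda>g. mat m m (\<lambda>(i, j). if f i #> g = f j then 1 else (0 :: complex)))"
    (is "is_rep G m ?R")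
proof -
  have f_eq: "f i = f j \<longleftrightarrow> i = j" if "i < m" "j < m" for i j
    using f that unfolding bij_betw_def inj_on_def by auto
  have f_onto: "\<exists>j<m. f j = C" if "C \<in> rcosets N" for C
    using f that unfolding bij_betw_def by (metis atLeastLessThan_iff imageE)
  have f_in: "f i \<in> rcosets N" if "i < m" for i
    using f that unfolding bij_betw_def by auto
  have f_carrier: "f i \<subseteq> carrier G" if "i < m" for i
    using f_in[OF that] subgroup.rcosets_carrier[OF N is_group] by blast
  have f_mult: "f i #> g \<in> rcosets N" if "i < m" "g \<in> carrier G" for i g
    using f_in[OF that(1)] that(2) subgroup.subset[OF N]
    by (auto simp: RCOSETS_def coset_mult_assoc intro!: rcosetsI)
  have "N \<in> rcosets N"
    using rcosetsI[OF subgroup.subset[OF N] one_closed] coset_mult_one[OF subgroup.subset[OF N]] by simp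
  then have "0 < m" using f_onto by fastforce
  moreover have "?R \<one> = 1\<^sub>m m"
    using f_eq f_carrier by (intro eq_matI) (auto simp: coset_mult_one)
  moreover have "?R (g \<otimes> h) = ?R g * ?R h" if g: "g \<in> carrier G" and h: "h \<in> carrier G" for g h
  proof (rule eq_matI)
    fix i l assume "i < dim_row (?R g * ?R h)" "l < dim_col (?R g * ?R h)"
    then have i: "i < m" and l: "l < m" by auto
    obtain j0 where j0: "j0 < m" "f j0 = f i #> g" using f_onto[OF f_mult[OF i g]] by blast
    have "(?R g * ?R h) $$ (i, l) = (\<Sum>j<m. ?R g $$ (i, j) * ?R h $$ (j, l))"
      by (rule index_mult_mat_sum) (use i l in auto)
    also have "\<dots> = (\<Sum>j<m. if j = j0 then ?R h $$ (j0, l) else 0)"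
      using i j0 f_eq by (intro sum.cong refl) auto
    also have "\<dots> = ?R (g \<otimes> h) $$ (i, l)"
      using i l j0 coset_mult_assoc[OF f_carrier[OF i] g h] by simp
    finally show "?R (g \<otimes> h) $$ (i, l) = (?R g * ?R h) $$ (i, l)" ..
  qed auto
  ultimately show ?thesis unfolding is_rep_def by auto
qed

lemma coset_permutation_rep:
  assumes fin: "finite (carrier G)" and N: "N \<lhd> G"
  obtains m R where "is_rep G m R" "\<forall>h\<in>N. R h = 1\<^sub>m m"
    "\<And>x. x \<in> carrier G \<Longrightarrow> R x = 1\<^sub>m m \<Longrightarrow> x \<in> N"
proof -
  interpret N: normal N G by (rule N)
  have "finite (rcosets N)"
    using rcosets_subset_PowG[OF N.subgroup_axioms] fin by (meson finite_Pow_iff finite_subset)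
  then obtain f where f: "bij_betw f {0..<card (rcosets N)} (rcosets N)"
    using ex_bij_betw_nat_finite by blast
  define m where "m = card (rcosets N)"
  define R where "R g = mat m m (\<lambda>(i, j). if f i #> g = f j then 1 else (0 :: complex))" for g
  have f_in: "f i \<in> rcosets N" if "i < m" for i
    using f that unfolding m_def bij_betw_def by auto
  have f_eq: "f i = f j \<longleftrightarrow> i = j" if "i < m" "j < m" for i j
    using f that unfolding m_def bij_betw_def inj_on_def by auto
  have "is_rep G m R"
    unfolding R_def m_def by (rule coset_permutation_matrices_rep[OF N.subgroup_axioms f])
  moreover have "R h = 1\<^sub>m m" if h: "h \<in> N" for h
  proof -
    have "f i #> h = f i" if i: "i < m" for i
    proof -
      obtain x where x: "x \<in> carrier G" "f i = N #> x"
        using f_in[OF i] unfolding RCOSETS_def by blast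
      have "f i #> h = N #> (x \<otimes> h)"
        using x h N.subset coset_mult_assoc by auto
      also have "\<dots> = N #> x"
        using rcos_eq_iff[OF N.subgroup_axioms] N.inv_op_closed2 x h N.subset by auto
      finally show ?thesis using x by simp
    qed
    then show ?thesis
      using f_eq unfolding R_def by (intro eq_matI) auto
  qed
  moreover have "x \<in> N" if x: "x \<in> carrier G" and Rx: "R x = 1\<^sub>m m" for x
  proof -
    obtain i0 where i0: "i0 < m" "f i0 = N"
      using f rcosetsI[OF N.subset one_closed] coset_mult_one[OF N.subset] unfolding m_def bij_betw_def
      by (metis atLeastLessThan_iff imageE)
    have "R x $$ (i0, i0) = 1" using Rx i0 by simp
    then have "N #> x = N" using i0 unfolding R_def by (simp split: if_splits)
    then show ?thesis using rcos_self[OF x N.subgroup_axioms] by simp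
  qed
  ultimately show ?thesis using that by blast
qed

lemma nonlinear_irr_rep_trivial_on:
  assumes fin: "finite (carrier G)" and N: "N \<lhd> G" and nd: "\<not> derived G (carrier G) \<subseteq> N"
  obtains n \<rho> where "irr_rep G n \<rho>" "\<forall>h\<in>N. \<rho> h = 1\<^sub>m n" "n \<noteq> 1"
proof (rule ccontr)
  assume "\<not> thesis"
  then have linear: "\<And>n \<rho>. irr_rep G n \<rho> \<Longrightarrow> \<forall>h\<in>N. \<rho> h = 1\<^sub>m n \<Longrightarrow> n = 1"
    using that by blast
  have NG: "N \<subseteq> carrier G" using normal_imp_subgroup[OF N] subgroup.subset by blast
  obtain m R where R: "is_rep G m R" "\<forall>h\<in>N. R h = 1\<^sub>m m"
    and ker: "\<And>x. x \<in> carrier G \<Longrightarrow> R x = 1\<^sub>m m \<Longrightarrow> x \<in> N"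
    using coset_permutation_rep[OF fin N] by blast
  have "a \<otimes> b \<otimes> inv a \<otimes> inv b \<in> N" if "a \<in> carrier G" "b \<in> carrier G" for a b
    using ker rep_commutator_eq_one_iff[OF R(1)] rep_commutes_if_irr_reps_linear[OF fin NG linear R] that
    by simp
  then have "derived_set G (carrier G) \<subseteq> N" by blast
  then have "derived G (carrier G) \<subseteq> N"
    unfolding derived_def using generate_subgroup_incl normal_imp_subgroup[OF N] by blast
  with nd show False ..
qed

end

section \<open>Character degrees and the centre of the quotient\<close>

lemma trivial_irr_rep: "irr_rep G 1 (\<lambda>_. 1\<^sub>m 1)"
  unfolding irr_rep_def
proof (intro conjI allI impI)
  show "is_rep G 1 (\<lambda>_. 1\<^sub>m 1)" unfolding is_rep_def by simp
  fix W assume W: "invariant_subspace G 1 (\<lambda>_. 1\<^sub>m 1) W"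
  show "W = {0\<^sub>v 1} \<or> W = carrier_vec 1"
  proof (cases "W \<subseteq> {0\<^sub>v 1}")
    case True
    then show ?thesis using W unfolding invariant_subspace_def by auto
  next
    case False
    then obtain w where w: "w \<in> W" "w \<noteq> 0\<^sub>v 1" by auto
    have wc: "w \<in> carrier_vec 1" using w W unfolding invariant_subspace_def by auto
    have w0: "w $ 0 \<noteq> 0"
    proof
      assume "w $ 0 = 0"
      then have "w = 0\<^sub>v 1" using wc by (intro eq_vecI) auto
      then show False using w by simp
    qed
    have "v \<in> W" if v: "v \<in> carrier_vec 1" for v
    proof -
      have "v = (v $ 0 / w $ 0) \<cdot>\<^sub>v w" using v wc w0 by (intro eq_vecI) auto
      then show ?thesis using W w unfolding invariant_subspace_def by metis
    qed
    then show ?thesis using W unfolding invariant_subspace_def by auto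
  qed
qed

context group
begin

lemma degree_in_cd: "irr_rep G n \<rho> \<Longrightarrow> of_nat n \<in> cd G"
  unfolding cd_def Irr_def using character_one[OF irr_rep_is_rep] by (metis (mono_tags) image_eqI mem_Collect_eq)

lemma nonlinear_degrees_eq_if_card_cd_2:
  assumes cd: "card (cd G) = 2"
    and irr: "irr_rep G n \<rho>" "irr_rep G n' \<rho>'" and nonlinear: "n \<noteq> 1" "n' \<noteq> 1"
  shows "n = n'"
proof (rule ccontr)
  assume "n \<noteq> n'"
  then have "card {1, of_nat n, of_nat n' :: complex} = 3"
    using nonlinear by simp
  moreover have "{1, of_nat n, of_nat n'} \<subseteq> cd G"
    using degree_in_cd[OF trivial_irr_rep] degree_in_cd[OF irr(1)] degree_in_cd[OF irr(2)] by simp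
  moreover have "finite (cd G)" using cd by (metis card.infinite zero_neq_numeral)
  ultimately have "3 \<le> card (cd G)" by (metis card_mono)
  then show False using cd by simp
qed

end

(* The preimage of Z(G/N) in G. *)
definition center_mod :: "('a, 'b) monoid_scheme \<Rightarrow> 'a set \<Rightarrow> 'a set" where
  "center_mod G N = {x \<in> carrier G. \<forall>g\<in>carrier G. x \<otimes>\<^bsub>G\<^esub> g \<otimes>\<^bsub>G\<^esub> inv\<^bsub>G\<^esub> x \<otimes>\<^bsub>G\<^esub> inv\<^bsub>G\<^esub> g \<in> N}"

context group
begin

lemma FactGroup_center:
  assumes N: "N \<lhd> G"
  shows "group_center (G Mod N) = (\<lambda>x. N #> x) ` center_mod G N"
proof -
  interpret N: normal N G by (rule N)
  have comm_iff: "(N #> x) <#> (N #> g) = (N #> g) <#> (N #> x) \<longleftrightarrow> x \<otimes> g \<otimes> inv x \<otimes> inv g \<in> N"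
    if x: "x \<in> carrier G" and g: "g \<in> carrier G" for x g
  proof -
    have "x \<otimes> g \<otimes> inv x \<otimes> inv g = (x \<otimes> g) \<otimes> inv (g \<otimes> x)"
      using x g by (simp add: inv_mult_group m_assoc)
    then show ?thesis
      using N.rcos_sum rcos_eq_iff[OF N.subgroup_axioms] x g by simp
  qed
  show ?thesis
  proof (intro equalityI subsetI)
    fix C assume "C \<in> group_center (G Mod N)"
    then have C: "C \<in> rcosets N" and comm: "\<forall>C'\<in>rcosets N. C <#> C' = C' <#> C"
      unfolding group_center_def FactGroup_def by auto
    obtain x where x: "x \<in> carrier G" "C = N #> x" using C unfolding RCOSETS_def by blast
    have "x \<in> center_mod G N"
      unfolding center_mod_def
    proof (intro CollectI conjI ballI)
      fix g assume g: "g \<in> carrier G"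
      have "(N #> x) <#> (N #> g) = (N #> g) <#> (N #> x)"
        using comm rcosetsI[OF N.subset g] x by simp
      then show "x \<otimes> g \<otimes> inv x \<otimes> inv g \<in> N" using comm_iff[OF x(1) g] by simp
    qed (rule x(1))
    then show "C \<in> (\<lambda>x. N #> x) ` center_mod G N" using x by blast
  next
    fix C assume "C \<in> (\<lambda>x. N #> x) ` center_mod G N"
    then obtain x where x: "x \<in> center_mod G N" "C = N #> x" by blast
    have "C <#> C' = C' <#> C" if "C' \<in> rcosets N" for C'
      using that x comm_iff unfolding RCOSETS_def center_mod_def by auto
    then show "C \<in> group_center (G Mod N)"
      using x rcosetsI[OF N.subset] unfolding group_center_def FactGroup_def center_mod_def by auto
  qed
qed

lemma center_mod_subset_char_center:
  assumes irr: "irr_rep G n \<rho>" and ker: "\<forall>h\<in>N. \<rho> h = 1\<^sub>m n" and fin: "finite (carrier G)"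
  shows "center_mod G N \<subseteq> char_center G (character_of G \<rho>)"
proof
  fix x assume "x \<in> center_mod G N"
  then have x: "x \<in> carrier G" and comm: "\<And>g. g \<in> carrier G \<Longrightarrow> x \<otimes> g \<otimes> inv x \<otimes> inv g \<in> N"
    unfolding center_mod_def by auto
  show "x \<in> char_center G (character_of G \<rho>)"
    using central_image_in_char_center[OF irr fin x] rep_commutator_eq_one_iff[OF irr_rep_is_rep[OF irr] x]
      comm ker by blast
qed

end

lemma char_center_subset_center_mod:
  assumes "comm_subgroup G (char_center G \<chi>) (carrier G) \<subseteq> N"
  shows "char_center G \<chi> \<subseteq> center_mod G N"
  using assms unfolding comm_subgroup_def center_mod_def char_center_def by (blast intro: generate.incl)

theorem mainTheorem11:
  fixes G :: "('a, 'b) monoid_scheme" and N :: "'a set" and \<chi> :: "'a \<Rightarrow> complex"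
  assumes "group G" and "finite (carrier G)"
    and "GVZ G" and "card (cd G) = 2"
    and "N \<lhd> G"
    and "\<not> derived G (carrier G) \<subseteq> N"
    and "\<chi> \<in> nl G"
    and "comm_subgroup G (char_center G \<chi>) (carrier G) \<subseteq> N"
  shows "group_center (G Mod N) = (\<lambda>z. N #>\<^bsub>G\<^esub> z) ` char_center G \<chi>"
proof -
  interpret group G by fact
  note fin = \<open>finite (carrier G)\<close>
  obtain n \<rho> where irr: "irr_rep G n \<rho>" and \<chi>: "\<chi> = character_of G \<rho>" and "\<chi> \<one>\<^bsub>G\<^esub> \<noteq> 1"
    using \<open>\<chi> \<in> nl G\<close> unfolding nl_def Irr_def by blast
  then have "n \<noteq> 1" using character_one[OF irr_rep_is_rep[OF irr]] by auto
  obtain n' \<rho>' where irr': "irr_rep G n' \<rho>'" and ker: "\<forall>h\<in>N. \<rho>' h = 1\<^sub>m n'" and "n' \<noteq> 1"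
    using nonlinear_irr_rep_trivial_on[OF fin \<open>N \<lhd> G\<close> \<open>\<not> derived G (carrier G) \<subseteq> N\<close>] by blast
  have "n' = n"
    using nonlinear_degrees_eq_if_card_cd_2[OF \<open>card (cd G) = 2\<close> irr' irr] \<open>n \<noteq> 1\<close> \<open>n' \<noteq> 1\<close> by simp
  have "char_center G \<chi> \<subseteq> center_mod G N"
    by (rule char_center_subset_center_mod[OF \<open>comm_subgroup G (char_center G \<chi>) (carrier G) \<subseteq> N\<close>])
  moreover have "center_mod G N \<subseteq> char_center G (character_of G \<rho>')"
    by (rule center_mod_subset_char_center[OF irr' ker fin])
  moreover have "card (char_center G \<chi>) * n\<^sup>2 = card (char_center G (character_of G \<rho>')) * n\<^sup>2"
    using GVZ_card_char_center[OF \<open>GVZ G\<close> irr fin] GVZ_card_char_center[OF \<open>GVZ G\<close> irr' fin]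
      \<open>n' = n\<close> \<chi> by simp
  then have "card (char_center G \<chi>) = card (char_center G (character_of G \<rho>'))"
    using rep_pos[OF irr_rep_is_rep[OF irr]] by simp
  moreover have "finite (char_center G (character_of G \<rho>'))"
    using fin unfolding char_center_def by simp
  ultimately have "char_center G \<chi> = center_mod G N"
    by (metis card_subset_eq subset_antisym order_trans)
  then show ?thesis using FactGroup_center[OF \<open>N \<lhd> G\<close>] by simp
qed

end
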